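(* For $i\ge 1$, let $\sigma_i$ be any permutation of the set of $2^i$ consecutive even numbers $$E_i=\{(4^i+2)/3,\ (4^i+8)/3,\ \ldots,\ (4^{i+1}-4)/3\}$$ that contains no 3-term arithmetic progression as a subsequence. Let $\pi_i$ be any permutation of the set of $2^{i-1}$ consecutive odd numbers $$O_i=\{(4^i+2)/6,\ (4^i+14)/6,\ \ldots,\ (4^{i+1}-6)/6\}$$ that contains no 3-term arithmetic progression as a subsequence. Then: (a) the concatenation $\sigma_1\pi_1\sigma_2\pi_2\sigma_3\pi_3\cdots$ is a permutation of the positive integers; (b) whenever an odd number $x$ occurs in this sequence before an even number $y$, we have $2x-y<0$; (c) the sequence contains no 4-term arithmetic progression with odd common difference as a subsequence.
   Context: A finite or infinite sequence contains a $k$-term arithmetic progression with common difference $d\neq0$ as a subsequence if there are positions $i_1<\cdots<i_k$ whose entries satisfy $a_{i_{m+1}}-a_{i_m}=d$ for all $1\le m<k$. The difference $d$ may be positive or negative. Permutations of finite sets of integers avoiding 3-term arithmetic progressions exist for every finite set of consecutive even numbers and every finite set of consecutive odd numbers. *)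

theory Defs
  imports Main
begin

definition list_has_AP :: "nat \<Rightarrow> int \<Rightarrow> int list \<Rightarrow> bool" where
  "list_has_AP k d xs \<longleftrightarrow>
     (\<exists>p :: nat \<Rightarrow> nat. (\<forall>m. Suc m < k \<longrightarrow> p m < p (Suc m))
        \<and> (\<forall>m < k. p m < length xs)
        \<and> (\<forall>m. Suc m < k \<longrightarrow> xs ! p (Suc m) - xs ! p m = d))"

definition seq_has_AP :: "nat \<Rightarrow> int \<Rightarrow> (nat \<Rightarrow> int) \<Rightarrow> bool" where
  "seq_has_AP k d a \<longleftrightarrow>
     (\<exists>p :: nat \<Rightarrow> nat. (\<forall>m. Suc m < k \<longrightarrow> p m < p (Suc m))
        \<and> (\<forall>m. Suc m < k \<longrightarrow> a (p (Suc m)) - a (p m) = d))"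

definition block_start :: "(nat \<Rightarrow> 'a list) \<Rightarrow> nat \<Rightarrow> nat" where
  "block_start B k = (\<Sum>j<k. length (B j))"

definition inf_concat :: "(nat \<Rightarrow> 'a list) \<Rightarrow> nat \<Rightarrow> 'a" where
  "inf_concat B n = (let k = (LEAST k. n < block_start B (Suc k)) in B k ! (n - block_start B k))"

definition Eset :: "nat \<Rightarrow> int set" where
  "Eset i = {x. even x \<and> 4^i + 2 \<le> 3 * x \<and> 3 * x \<le> 4^(i+1) - 4}"

definition Oset :: "nat \<Rightarrow> int set" where
  "Oset i = {x. odd x \<and> 4^i + 2 \<le> 6 * x \<and> 6 * x \<le> 4^(i+1) - 6}"

end

theory Submission
  imports Defs
begin

(* The sequence is the concatenation of blocks B 0, B 1, B 2, ... where
   B (2i-2) = sigma_i enumerates E_i and B (2i-1) = pi_i enumerates O_i.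
   (a) The E_i partition the positive even numbers and the O_i the positive odd numbers,
       so the blocks are duplicate-free lists with pairwise disjoint sets covering the
       positive integers; a general lemma on infinite concatenations makes a bijective.
   (b) An odd x before an even y lies in some O_i with y in some E_j, j > i; the interval
       bounds give 6x <= 4^(i+1) - 6 < 4^j + 2 <= 3y, i.e. 2x - y < 0.
   (c) follows from (b) and positivity alone: an odd common difference makes the parities
       alternate, and applying (b) to the odd-even pairs of a 4-term progression yields a
       contradiction. *)

section \<open>Infinite concatenation of nonempty blocks\<close>

lemma block_start_Suc: "block_start B (Suc k) = block_start B k + length (B k)"
  by (simp add: block_start_def)

lemma block_start_mono: "i \<le> j \<Longrightarrow> block_start B i \<le> block_start B j"
  unfolding block_start_def by (rule sum_mono2) auto

lemma block_start_ge:
  assumes "\<And>k. B k \<noteq> []"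
  shows "k \<le> block_start B k"
proof (induction k)
  case (Suc k)
  have "length (B k) \<ge> 1" using assms[of k] by (simp add: Suc_le_eq)
  with Suc.IH show ?case by (simp add: block_start_Suc)
qed simp

definition block_of :: "(nat \<Rightarrow> 'a list) \<Rightarrow> nat \<Rightarrow> nat" where
  "block_of B n = (LEAST k. n < block_start B (Suc k))"

lemma inf_concat_eq: "inf_concat B n = B (block_of B n) ! (n - block_start B (block_of B n))"
  by (simp add: inf_concat_def block_of_def Let_def)

lemma block_of_bounds:
  assumes "\<And>k. B k \<noteq> []"
  shows "block_start B (block_of B n) \<le> n \<and> n < block_start B (Suc (block_of B n))"
proof
  have "n < block_start B (Suc n)" using block_start_ge[of B "Suc n", OF assms] by simp
  then show upper: "n < block_start B (Suc (block_of B n))"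
    unfolding block_of_def by (rule LeastI)
  show "block_start B (block_of B n) \<le> n"
  proof (cases "block_of B n")
    case (Suc j)
    then have "j < block_of B n" by simp
    then have "\<not> n < block_start B (Suc j)" unfolding block_of_def by (rule not_less_Least)
    with Suc show ?thesis by simp
  qed (simp add: block_start_def)
qed

lemma block_of_unique:
  assumes "\<And>k. B k \<noteq> []"
    and "block_start B k \<le> n" "n < block_start B (Suc k)"
  shows "block_of B n = k"
proof (rule ccontr)
  note bounds = block_of_bounds[of B n, OF assms(1)]
  assume "block_of B n \<noteq> k"
  then consider "Suc (block_of B n) \<le> k" | "Suc k \<le> block_of B n" by linarith
  then show False
    by cases (use bounds assms(2,3) block_start_mono[of _ _ B] in \<open>fastforce+\<close>)
qed

lemma block_of_mono:
  assumes "\<And>k. B k \<noteq> []" and "m \<le> n"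
  shows "block_of B m \<le> block_of B n"
proof (rule ccontr)
  assume "\<not> ?thesis"
  then have "block_start B (Suc (block_of B n)) \<le> block_start B (block_of B m)"
    by (intro block_start_mono) simp
  with block_of_bounds[of B n, OF assms(1)] block_of_bounds[of B m, OF assms(1)] assms(2)
  show False by simp
qed

lemma inf_concat_offset_bound:
  assumes "\<And>k. B k \<noteq> []"
  shows "n - block_start B (block_of B n) < length (B (block_of B n))"
  using block_of_bounds[of B n, OF assms] unfolding block_start_Suc by arith

lemma inf_concat_in_block:
  assumes "\<And>k. B k \<noteq> []"
  shows "inf_concat B n \<in> set (B (block_of B n))"
  unfolding inf_concat_eq by (rule nth_mem) (rule inf_concat_offset_bound[OF assms])

lemma inf_concat_at:
  assumes "\<And>k. B k \<noteq> []" and "j < length (B k)"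
  shows "inf_concat B (block_start B k + j) = B k ! j"
proof -
  have "block_of B (block_start B k + j) = k"
    by (rule block_of_unique[OF assms(1)]) (use assms(2) in \<open>simp_all add: block_start_Suc\<close>)
  then show ?thesis by (simp add: inf_concat_eq)
qed

lemma inf_concat_bij:
  assumes nonempty: "\<And>k. B k \<noteq> []"
    and dist: "\<And>k. distinct (B k)"
    and disj: "\<And>k k'. k \<noteq> k' \<Longrightarrow> set (B k) \<inter> set (B k') = {}"
  shows "bij_betw (inf_concat B) UNIV (\<Union>k. set (B k))"
  unfolding bij_betw_def
proof
  show "inj_on (inf_concat B) UNIV"
  proof (rule inj_onI)
    fix m n assume eq: "inf_concat B m = inf_concat B n"
    have "inf_concat B m \<in> set (B (block_of B m)) \<inter> set (B (block_of B n))"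
      using inf_concat_in_block[of B m, OF nonempty] inf_concat_in_block[of B n, OF nonempty]
      eq by simp
    then have same: "block_of B m = block_of B n"
      using disj[of "block_of B m" "block_of B n"] by blast
    define k where "k = block_of B m"
    have im: "m - block_start B k < length (B k)"
      using inf_concat_offset_bound[of B m, OF nonempty] unfolding k_def .
    have in_: "n - block_start B k < length (B k)"
      using inf_concat_offset_bound[of B n, OF nonempty] same unfolding k_def by simp
    have "B k ! (m - block_start B k) = B k ! (n - block_start B k)"
      using eq same unfolding inf_concat_eq k_def by simp
    then have "m - block_start B k = n - block_start B k"
      using nth_eq_iff_index_eq[OF dist im in_] by simp
    moreover have "block_start B k \<le> m" "block_start B k \<le> n"
      using block_of_bounds[of B m, OF nonempty] block_of_bounds[of B n, OF nonempty] same
      unfolding k_def by simp_all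
    ultimately show "m = n" by linarith
  qed
next
  show "range (inf_concat B) = (\<Union>k. set (B k))"
  proof
    show "range (inf_concat B) \<subseteq> (\<Union>k. set (B k))"
      using inf_concat_in_block[of B, OF nonempty] by blast
    show "(\<Union>k. set (B k)) \<subseteq> range (inf_concat B)"
    proof
      fix x assume "x \<in> (\<Union>k. set (B k))"
      then obtain k j where "j < length (B k)" "B k ! j = x" by (auto simp: in_set_conv_nth)
      then show "x \<in> range (inf_concat B)"
        using inf_concat_at[of B, OF nonempty] by (metis rangeI)
    qed
  qed
qed

section \<open>The sets E_i and O_i\<close>

text \<open>All bounds of E_i and O_i are integers because 4^(i+1) \<equiv> 4 (mod 12).\<close>
lemma pow4_form: "\<exists>q. (4::int) ^ Suc k = 12 * q + 4"
proof (induction k)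
  case (Suc k)
  then obtain q where "(4::int) ^ Suc k = 12 * q + 4" by blast
  then have "(4::int) ^ Suc (Suc k) = 12 * (4 * q + 1) + 4" by simp
  then show ?case by blast
qed (auto intro: exI[of _ 0])

lemma pow4_ge: "int n + 1 \<le> (4::int) ^ n"
  by (induction n) simp_all

lemma Eset_increasing: "i < j \<Longrightarrow> x \<in> Eset i \<Longrightarrow> y \<in> Eset j \<Longrightarrow> x < y"
  using power_increasing[of "i + 1" j "4::int"] unfolding Eset_def by auto

lemma Oset_increasing: "i < j \<Longrightarrow> x \<in> Oset i \<Longrightarrow> y \<in> Oset j \<Longrightarrow> x < y"
  using power_increasing[of "i + 1" j "4::int"] unfolding Oset_def by auto

text \<open>(4^i+2)/3 lies in E_i and (4^i+2)/6 lies in O_i.\<close>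
lemma Eset_Oset_nonempty:
  assumes "i \<ge> 1"
  shows "Eset i \<noteq> {}" and "Oset i \<noteq> {}"
proof -
  obtain q where q: "(4::int) ^ i = 12 * q + 4"
    using pow4_form[of "i - 1"] assms by auto
  moreover have "(0::int) < 4 ^ i" by simp
  ultimately have "4 * q + 2 \<in> Eset i" "2 * q + 1 \<in> Oset i"
    unfolding Eset_def Oset_def by simp_all
  then show "Eset i \<noteq> {}" "Oset i \<noteq> {}" by auto
qed

lemma Eset_cover:
  "even x \<Longrightarrow> 0 < x \<Longrightarrow> 3 * x \<le> 4 ^ Suc n - 4 \<Longrightarrow> \<exists>i \<ge> 1. x \<in> Eset i"
proof (induction n)
  case (Suc n)
  show ?case
  proof (cases "3 * x \<le> 4 ^ Suc n - 4")
    case False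
    obtain q where q: "(4::int) ^ Suc n = 12 * q + 4" using pow4_form by blast
    obtain y where y: "x = 2 * y" using \<open>even x\<close> by (rule evenE)
    with False q have "y \<ge> 2 * q + 1" by linarith
    with q y have "4 ^ Suc n + 2 \<le> 3 * x" by linarith
    moreover have "3 * x \<le> 4 ^ (Suc n + 1) - 4"
      using Suc.prems(3) by (simp only: Suc_eq_plus1)
    ultimately have "x \<in> Eset (Suc n)" using Suc.prems(1) unfolding Eset_def by blast
    then show ?thesis by (intro exI[of _ "Suc n"]) simp
  qed (use Suc.IH Suc.prems(1,2) in blast)
qed simp

lemma Oset_cover:
  "odd x \<Longrightarrow> 0 < x \<Longrightarrow> 6 * x \<le> 4 ^ Suc n - 6 \<Longrightarrow> \<exists>i \<ge> 1. x \<in> Oset i"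
proof (induction n)
  case (Suc n)
  show ?case
  proof (cases "6 * x \<le> 4 ^ Suc n - 6")
    case False
    obtain q where q: "(4::int) ^ Suc n = 12 * q + 4" using pow4_form by blast
    obtain y where y: "x = 2 * y + 1" using \<open>odd x\<close> by (rule oddE)
    with False q have "y \<ge> q" by linarith
    with q y have "4 ^ Suc n + 2 \<le> 6 * x" by linarith
    moreover have "6 * x \<le> 4 ^ (Suc n + 1) - 6"
      using Suc.prems(3) by (simp only: Suc_eq_plus1)
    ultimately have "x \<in> Oset (Suc n)" using Suc.prems(1) unfolding Oset_def by blast
    then show ?thesis by (intro exI[of _ "Suc n"]) simp
  qed (use Suc.IH Suc.prems(1,2) in blast)
qed simp

definition block_set :: "nat \<Rightarrow> int set" where
  "block_set k = (if even k then Eset (k div 2 + 1) else Oset (k div 2 + 1))"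

lemma block_set_parity: "x \<in> block_set k \<Longrightarrow> even x \<longleftrightarrow> even k"
  unfolding block_set_def Eset_def Oset_def by (auto split: if_splits)

lemma block_set_nonempty: "block_set k \<noteq> {}"
  using Eset_Oset_nonempty[of "k div 2 + 1"] unfolding block_set_def by simp

lemma block_set_increasing:
  assumes "k < k'" "even k \<longleftrightarrow> even k'" "x \<in> block_set k" "y \<in> block_set k'"
  shows "x < y"
proof -
  from assms(1,2) have "k div 2 + 1 < k' div 2 + 1" by presburger
  then show ?thesis
    using assms(2-4) unfolding block_set_def
    by (cases "even k") (auto intro: Eset_increasing Oset_increasing)
qed

lemma block_set_disjoint:
  assumes "k \<noteq> k'" shows "block_set k \<inter> block_set k' = {}"
proof (cases "even k \<longleftrightarrow> even k'")
  case True
  from assms consider "k < k'" | "k' < k" by linarith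
  then show ?thesis
    by cases (use True block_set_increasing[of k k'] block_set_increasing[of k' k] in force)+
next
  case False
  then show ?thesis using block_set_parity by blast
qed

lemma block_set_union: "(\<Union>k. block_set k) = {x. x > 0}"
proof
  show "(\<Union>k. block_set k) \<subseteq> {x. x > 0}"
    using zero_less_power[of "4::int"] unfolding block_set_def Eset_def Oset_def
    by (fastforce split: if_splits)
  show "{x. x > 0} \<subseteq> (\<Union>k. block_set k)"
  proof
    fix x :: int assume "x \<in> {x. x > 0}"
    then have x: "x > 0" by simp
    define n where "n = nat (6 * x) + 6"
    have "6 * x + 8 \<le> (4::int) ^ Suc n" using pow4_ge[of "Suc n"] x unfolding n_def by simp
    then consider i where "i \<ge> 1" "x \<in> Eset i" | i where "i \<ge> 1" "x \<in> Oset i"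
      using Eset_cover[of x n] Oset_cover[of x n] x by (cases "even x") auto
    then show "x \<in> (\<Union>k. block_set k)"
    proof cases
      case 1
      then have "x \<in> block_set (2 * (i - 1))" unfolding block_set_def by simp
      then show ?thesis by blast
    next
      case 2
      then have "x \<in> block_set (2 * (i - 1) + 1)" unfolding block_set_def by simp
      then show ?thesis by blast
    qed
  qed
qed

text \<open>An odd element of an earlier block is less than half of an even element of a later
  one: 6x \<le> 4^(i+1) - 6 < 4^j + 2 \<le> 3y for x \<in> O_i, y \<in> E_j, i < j.\<close>
lemma block_set_odd_even:
  assumes x: "x \<in> block_set k" and y: "y \<in> block_set k'"
    and "odd x" "even y" "k \<le> k'"
  shows "2 * x - y < 0"
proof -
  have "odd k" "even k'" using block_set_parity[OF x] block_set_parity[OF y] assms by auto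
  with \<open>k \<le> k'\<close> have "k div 2 + 1 + 1 \<le> k' div 2 + 1" by presburger
  then have "(4::int) ^ (k div 2 + 1 + 1) \<le> 4 ^ (k' div 2 + 1)" by (rule power_increasing) simp
  moreover have "6 * x \<le> 4 ^ (k div 2 + 1 + 1) - 6"
    using x \<open>odd k\<close> unfolding block_set_def Oset_def by simp
  moreover have "4 ^ (k' div 2 + 1) + 2 \<le> 3 * y"
    using y \<open>even k'\<close> unfolding block_set_def Eset_def by simp
  ultimately show ?thesis by linarith
qed

section \<open>Part (c) from part (b)\<close>

text \<open>A positive integer sequence in which every odd entry is less than half of every later
  even entry has no 4-term progression with odd difference: the parities alternate,
  and applying the hypothesis to the odd-even pairs forces a contradiction.\<close>
lemma no_odd_4AP_from_odd_even:
  fixes a :: "nat \<Rightarrow> int"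
  assumes pos: "\<And>n. a n > 0"
    and odd_even: "\<And>m n. m < n \<Longrightarrow> odd (a m) \<Longrightarrow> even (a n) \<Longrightarrow> 2 * a m - a n < 0"
  shows "\<not> (\<exists>d. odd d \<and> seq_has_AP 4 d a)"
proof
  assume "\<exists>d. odd d \<and> seq_has_AP 4 d a"
  then obtain d p where "odd d"
    and incr: "\<forall>m. Suc m < 4 \<longrightarrow> p m < p (Suc m)"
    and diff: "\<forall>m. Suc m < 4 \<longrightarrow> a (p (Suc m)) - a (p m) = d"
    unfolding seq_has_AP_def by blast
  have lt: "p 0 < p 1" "p 1 < p 2" "p 2 < p 3" using incr by (auto simp: numeral_eq_Suc)
  have step: "a (p 1) = a (p 0) + d" "a (p 2) = a (p 1) + d" "a (p 3) = a (p 2) + d"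
    using diff[rule_format, of 0] diff[rule_format, of 1] diff[rule_format, of 2]
    by (auto simp: numeral_eq_Suc)
  show False
  proof (cases "odd (a (p 0))")
    case True
    \<comment> \<open>odd, even, odd, even: then a(p 0) < d and d < -a(p 0)\<close>
    then have "even (a (p 1))" "odd (a (p 2))" "even (a (p 3))" using step \<open>odd d\<close> by simp_all
    with True lt have "2 * a (p 0) - a (p 1) < 0" "2 * a (p 2) - a (p 3) < 0"
      using odd_even by blast+
    with step pos[of "p 0"] show False by linarith
  next
    case False
    \<comment> \<open>even, odd, even: then a(p 0) < 0\<close>
    then have "odd (a (p 1))" "even (a (p 2))" using step \<open>odd d\<close> by simp_all
    with lt have "2 * a (p 1) - a (p 2) < 0" using odd_even by blast
    with step pos[of "p 0"] show False by linarith
  qed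
qed

theorem mainTheorem6:
  fixes \<sigma> \<pi> :: "nat \<Rightarrow> int list"
  assumes sigma: "\<And>i. i \<ge> 1 \<Longrightarrow> distinct (\<sigma> i) \<and> set (\<sigma> i) = Eset i
                         \<and> \<not> (\<exists>d. d \<noteq> 0 \<and> list_has_AP 3 d (\<sigma> i))"
      and pi: "\<And>i. i \<ge> 1 \<Longrightarrow> distinct (\<pi> i) \<and> set (\<pi> i) = Oset i
                         \<and> \<not> (\<exists>d. d \<noteq> 0 \<and> list_has_AP 3 d (\<pi> i))"
  defines "a \<equiv> inf_concat (\<lambda>k. if even k then \<sigma> (k div 2 + 1) else \<pi> (k div 2 + 1))"
  shows "bij_betw a UNIV {x::int. x > 0}
         \<and> (\<forall>m n. m < n \<and> odd (a m) \<and> even (a n) \<longrightarrow> 2 * a m - a n < 0)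
         \<and> \<not> (\<exists>d. odd d \<and> seq_has_AP 4 d a)"
proof -
  define B where "B = (\<lambda>k. if even k then \<sigma> (k div 2 + 1) else \<pi> (k div 2 + 1))"
  have a_def': "a = inf_concat B" unfolding a_def B_def ..
  have set_B: "set (B k) = block_set k" and distinct_B: "distinct (B k)" for k
    using sigma[of "k div 2 + 1"] pi[of "k div 2 + 1"] unfolding B_def block_set_def by simp_all
  have nonempty: "B k \<noteq> []" for k using block_set_nonempty[of k] set_B[of k] by auto
  have in_block: "a n \<in> block_set (block_of B n)" for n
    using inf_concat_in_block[OF nonempty] set_B a_def' by simp
  have bij: "bij_betw a UNIV {x::int. x > 0}"
    using inf_concat_bij[of B, OF nonempty distinct_B] block_set_disjoint block_set_union
    unfolding a_def' set_B by simp
  have odd_even: "2 * a m - a n < 0" if "m < n" "odd (a m)" "even (a n)" for m n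
    using block_set_odd_even[OF in_block in_block] block_of_mono[OF nonempty] that by simp
  have pos: "a n > 0" for n using bij by (auto simp: bij_betw_def)
  have "\<not> (\<exists>d. odd d \<and> seq_has_AP 4 d a)" by (rule no_odd_4AP_from_odd_even[OF pos odd_even])
  with bij odd_even show ?thesis by blast
qed

end
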